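(* Let $A$ be a $\boldsymbol{\mathit{ba}\ell}$-algebra, $B$ the free boolean extension of ${\sf Arch}(A)$, and work in $D(\mathbb R[B])$. (1) For every $I\in{\sf Arch}(A)$, $x_I=\bigvee\{x_{\lnot J}\mid J\in{\sf Arch}(A),\ J\vee I=A\}$. (2) If $0\le f\in D(\mathbb R[B])$, then there are reals $r_I\ge0$ ($I\in{\sf Arch}(A)$) with $f=\bigvee\{r_Ix_{\lnot I}\mid I\in{\sf Arch}(A)\}$. (3) If $0\le f\in D(\mathbb R[B])$, $0\le t\in\mathbb R$, and $f=\bigvee\{r_Ix_{\lnot I}\mid I\in{\sf Arch}(A)\}$ with all $r_I\ge0$, then $f+t=\bigvee\{(t+r_I)x_{\lnot I}\mid I\in{\sf Arch}(A)\}$.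
   Context: A $\boldsymbol{\mathit{ba}\ell}$-algebra is a commutative unital lattice-ordered algebra $A$ over $\mathbb R$ that is bounded (for every $a\in A$ there is an integer $n\ge1$ with $a\le n\cdot1$) and archimedean (if $na\le b$ for all $n\ge1$ then $a\le0$). An $\ell$-ideal is a ring ideal $I$ with $|a|\le|b|$, $b\in I\Rightarrow a\in I$; it is archimedean if $A/I$ is archimedean. ${\sf Arch}(A)$ is the set of archimedean $\ell$-ideals ordered by inclusion; it is a compact regular frame, with meet $\cap$ and join $I\vee J$ the least archimedean $\ell$-ideal containing $I\cup J$. $B$ is the free boolean extension of the bounded distributive lattice ${\sf Arch}(A)$ (boolean algebra generated by ${\sf Arch}(A)$ as a bounded sublattice, with the universal property for bounded lattice maps into boolean algebras); ${\sf Arch}(A)\subseteq B$ and $\lnot$ is complement in $B$. $\mathbb R[B]$ is the quotient of $\mathbb R[x_e\mid e\in B]$ by the ideal generated by $x_{e\wedge f}-x_ex_f$, $x_{e\vee f}-(x_e+x_f-x_ex_f)$, $x_{\lnot e}-(1-x_e)$, $x_0$; it is a $\boldsymbol{\mathit{ba}\ell}$-algebra. $D(\mathbb R[B])$ is its Dedekind completion (Dedekind complete $\boldsymbol{\mathit{ba}\ell}$-algebra containing $\mathbb R[B]$, every element a join of elements of $\mathbb R[B]$). *)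

theory Defs
  imports Main "HOL-Library.Lattice_Algebras"
begin

definition is_join :: "'a::order set \<Rightarrow> 'a \<Rightarrow> bool" where
  "is_join S f \<longleftrightarrow> (\<forall>s\<in>S. s \<le> f) \<and> (\<forall>u. (\<forall>s\<in>S. s \<le> u) \<longrightarrow> f \<le> u)"

definition bal_algebra :: "('a::{comm_ring_1, real_algebra_1, lattice}) itself \<Rightarrow> bool" where
  "bal_algebra _ \<longleftrightarrow>
     (\<forall>a b c :: 'a. a \<le> b \<longrightarrow> a + c \<le> b + c) \<and>
     (\<forall>a b :: 'a. 0 \<le> a \<and> 0 \<le> b \<longrightarrow> 0 \<le> a * b) \<and>
     (\<forall>(r::real) (a::'a). 0 \<le> r \<and> 0 \<le> a \<longrightarrow> 0 \<le> r *\<^sub>R a) \<and>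
     (\<forall>a :: 'a. \<exists>n::nat. n \<ge> 1 \<and> a \<le> of_nat n) \<and>
     (\<forall>a b :: 'a. (\<forall>n::nat. n \<ge> 1 \<longrightarrow> of_nat n * a \<le> b) \<longrightarrow> a \<le> 0)"

definition dedekind_complete :: "('a::order) itself \<Rightarrow> bool" where
  "dedekind_complete _ \<longleftrightarrow>
     (\<forall>S :: 'a set. S \<noteq> {} \<and> (\<exists>u. \<forall>s\<in>S. s \<le> u) \<longrightarrow> (\<exists>f. is_join S f))"

definition labs :: "'a::{lattice, uminus} \<Rightarrow> 'a" where
  "labs a = sup a (- a)"

definition l_ideal :: "('a::{comm_ring_1, lattice}) set \<Rightarrow> bool" where
  "l_ideal I \<longleftrightarrow> 0 \<in> I \<and> (\<forall>a\<in>I. \<forall>b\<in>I. a + b \<in> I) \<and> (\<forall>a\<in>I. - a \<in> I) \<and>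
     (\<forall>a. \<forall>b\<in>I. a * b \<in> I) \<and> (\<forall>a b. labs a \<le> labs b \<and> b \<in> I \<longrightarrow> a \<in> I)"

text \<open>Archimedean l-ideal: A/I archimedean.  In A/I, [a] <= [b] iff (a - b)^+ \<in> I,
  so "n[a] <= [b] for all n >= 1 implies [a] <= 0" unfolds to the following.\<close>
definition arch_ideal :: "('a::{comm_ring_1, lattice}) set \<Rightarrow> bool" where
  "arch_ideal I \<longleftrightarrow> l_ideal I \<and>
     (\<forall>a b. (\<forall>n::nat. n \<ge> 1 \<longrightarrow> sup (of_nat n * a - b) 0 \<in> I) \<longrightarrow> sup a 0 \<in> I)"

definition Arch :: "('a::{comm_ring_1, lattice}) set set" where
  "Arch = {I. arch_ideal I}"

definition arch_join :: "('a::{comm_ring_1, lattice}) set \<Rightarrow> 'a set \<Rightarrow> 'a set" where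
  "arch_join I J = \<Inter> {K. arch_ideal K \<and> I \<union> J \<subseteq> K}"

inductive_set bool_gen :: "'b::boolean_algebra set \<Rightarrow> 'b set" for G where
  base: "g \<in> G \<Longrightarrow> g \<in> bool_gen G"
| bot: "bot \<in> bool_gen G"
| top: "top \<in> bool_gen G"
| inf: "a \<in> bool_gen G \<Longrightarrow> b \<in> bool_gen G \<Longrightarrow> inf a b \<in> bool_gen G"
| sup: "a \<in> bool_gen G \<Longrightarrow> b \<in> bool_gen G \<Longrightarrow> sup a b \<in> bool_gen G"
| compl: "a \<in> bool_gen G \<Longrightarrow> - a \<in> bool_gen G"

text \<open>emb : Arch(A) -> B exhibits B as the free boolean extension of the bounded
  distributive lattice Arch(A): a bounded lattice embedding whose image generates B.\<close>
definition free_bool_ext :: "('a::{comm_ring_1, lattice} set \<Rightarrow> 'b::boolean_algebra) \<Rightarrow> bool" where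
  "free_bool_ext emb \<longleftrightarrow>
     inj_on emb Arch \<and> emb {0} = bot \<and> emb UNIV = top \<and>
     (\<forall>I\<in>Arch. \<forall>J\<in>Arch. emb (I \<inter> J) = inf (emb I) (emb J)) \<and>
     (\<forall>I\<in>Arch. \<forall>J\<in>Arch. emb (arch_join I J) = sup (emb I) (emb J)) \<and>
     bool_gen (emb ` Arch) = UNIV"

text \<open>The image of R[B] in D: real linear combinations of the x_e.\<close>
definition RB_image :: "('b \<Rightarrow> 'd::real_vector) \<Rightarrow> 'd set" where
  "RB_image x = {(\<Sum>e\<in>F. c e *\<^sub>R x e) | F c. finite F}"

text \<open>x : B -> D exhibits D as D(R[B]): D is a Dedekind complete ba-l-algebra, x satisfies
  the defining relations of R[B], the induced map R[B] -> D is injective, and every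
  element of D is a join of elements of R[B].\<close>
definition dedekind_completion_RB ::
  "('b::boolean_algebra \<Rightarrow> 'd::{comm_ring_1, real_algebra_1, lattice}) \<Rightarrow> bool" where
  "dedekind_completion_RB x \<longleftrightarrow>
     bal_algebra TYPE('d) \<and> dedekind_complete TYPE('d) \<and>
     (\<forall>e f. x (inf e f) = x e * x f) \<and>
     (\<forall>e f. x (sup e f) = x e + x f - x e * x f) \<and>
     (\<forall>e. x (- e) = 1 - x e) \<and>
     x bot = 0 \<and>
     (\<forall>e. x e = 0 \<longrightarrow> e = bot) \<and>
     (\<forall>f. \<exists>S \<subseteq> RB_image x. is_join S f)"

end

theory Submission
  imports Defs
begin

text \<open>
  Everything rests on two density facts. In the free boolean extension B every nonzero element
  lies above a nonzero complement - I of an archimedean ideal: it contains some nonzero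
  K \<sqinter> - L, and because Arch(A) is a regular frame (for a in K but not in L take
  p = (n|a| - 1)^+ outside L and J the polar of p) there is J with J \<squnion> K = A and
  - (J \<squnion> L) = K \<sqinter> - L \<sqinter> - J \<noteq> 0. In D(R[B]) every element is a join of step functions
  \<Sum> c_e x_e, so every positive nonzero element dominates some d x_g with d > 0 and g \<noteq> 0.
  Together: a positive element dominating no d x(- I) is zero. This gives the least-upper-bound
  halves of (1) and (2), in (2) with r_I the largest r such that r x(- I) \<le> f. For (3), split
  an upper bound u as u x(- I) + u x(I) and use x(- {0}) = 1.
\<close>

context lattice_ab_group_add
begin

lemma sup_neg_0_eq_neg_inf: "sup (- a) 0 = - inf a 0"
  using neg_inf_eq_sup[of a 0] by (simp only: minus_zero)

lemma pos_part_diff_neg_part: "sup a 0 - sup (- a) 0 = a"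
  using add_eq_inf_sup[of a 0] unfolding sup_neg_0_eq_neg_inf diff_minus_eq_add by (simp only: add_0_right)

lemma inf_pos_part_neg_part: "inf (sup a 0) (sup (- a) 0) = 0"
proof -
  have "sup (- a) 0 = sup a 0 - (sup a 0 - sup (- a) 0)"
    by (simp only: diff_diff_eq2 add_diff_cancel_left')
  also have "\<dots> = sup a 0 + - a"
    unfolding pos_part_diff_neg_part by (rule diff_conv_add_uminus)
  finally have "inf (sup a 0) (sup (- a) 0) = sup a 0 + inf 0 (- a)"
    by (simp only: add_inf_distrib_left add_0_right)
  also have "inf 0 (- a) = - sup a 0"
    using neg_sup_eq_inf[of 0 a] by (simp only: minus_zero sup_commute)
  finally show ?thesis by (simp only: add.right_inverse)
qed

lemma inf_add_eq_0:
  assumes "0 \<le> p" "0 \<le> q" "0 \<le> c" "inf p c = 0" "inf q c = 0"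
  shows "inf (p + q) c = 0"
proof (rule order.antisym)
  have "inf (p + q) c \<le> inf (p + q) (c + q)"
    using assms(2) by (intro inf_mono) (simp_all add: add_increasing2)
  also have "\<dots> = q"
    using assms(4) add_inf_distrib_right[of p c q] by simp
  finally have "inf (p + q) c \<le> inf q c" by simp
  then show "inf (p + q) c \<le> 0" using assms(5) by simp
  show "0 \<le> inf (p + q) c" using assms by simp
qed

lemma pos_part_le_pos_part_diff_add: "sup a 0 \<le> sup (a - b) 0 + sup b 0"
proof (rule sup_least)
  have "a = (a - b) + b" by simp
  also have "\<dots> \<le> sup (a - b) 0 + sup b 0" by (intro add_mono) simp_all
  finally show "a \<le> sup (a - b) 0 + sup b 0" .
  show "0 \<le> sup (a - b) 0 + sup b 0" by (intro add_nonneg_nonneg) simp_all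
qed

lemma inf_eq_0_if_le:
  assumes "0 \<le> a" "a \<le> b" "0 \<le> c" "inf b c = 0"
  shows "inf a c = 0"
proof (rule order.antisym)
  have "inf a c \<le> inf b c" using assms(2) by (rule inf_mono) (rule order_refl)
  then show "inf a c \<le> 0" using assms(4) by simp
  show "0 \<le> inf a c" using assms(1,3) by simp
qed

end

context lattice_ab_group_add_abs
begin

lemma abs_eq_pos_part_add_neg_part: "\<bar>a\<bar> = sup a 0 + sup (- a) 0"
  unfolding abs_prts pprt_def nprt_def sup_neg_0_eq_neg_inf by (rule diff_conv_add_uminus)

end

definition polar :: "'a::{ab_group_add, lattice} set \<Rightarrow> 'a set" where
  "polar S = {z. \<forall>y\<in>S. inf (labs z) (labs y) = 0}"

locale bal =
  fixes T :: "'a::{comm_ring_1, real_algebra_1, lattice} itself"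
  assumes bal: "bal_algebra T"
begin

lemma bal_add_right_mono: "a \<le> b \<Longrightarrow> a + c \<le> b + (c::'a)"
  and bal_mult_nonneg: "0 \<le> a \<Longrightarrow> 0 \<le> b \<Longrightarrow> 0 \<le> a * (b::'a)"
  and bal_scaleR_nonneg: "0 \<le> r \<Longrightarrow> 0 \<le> a \<Longrightarrow> 0 \<le> r *\<^sub>R (a::'a)"
  and bal_bounded: "\<exists>n::nat. n \<ge> 1 \<and> (a::'a) \<le> of_nat n"
  and bal_archimedean: "(\<And>n::nat. n \<ge> 1 \<Longrightarrow> of_nat n * a \<le> b) \<Longrightarrow> (a::'a) \<le> 0"
  using bal unfolding bal_algebra_def by blast+

sublocale L: lattice_ring labs "(+)" 0 "(-)" uminus "(\<le>)" "(<)" inf sup "(*) :: 'a \<Rightarrow> 'a \<Rightarrow> 'a"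
proof unfold_locales
  fix a b c :: 'a
  show "a \<le> b \<Longrightarrow> c + a \<le> c + b" using bal_add_right_mono by (simp add: add.commute)
  assume "a \<le> b" "0 \<le> c"
  moreover have "0 \<le> b - a \<longleftrightarrow> a \<le> b"
    using bal_add_right_mono[of 0 "b - a" a] bal_add_right_mono[of a b "- a"] by auto
  moreover have "0 \<le> c * b - c * a \<longleftrightarrow> c * a \<le> c * b"
    using bal_add_right_mono[of 0 "c * b - c * a" "c * a"] bal_add_right_mono[of "c * a" "c * b" "- (c * a)"]
    by auto
  ultimately show "c * a \<le> c * b" and "a * c \<le> b * c"
    using bal_mult_nonneg[of c "b - a"] by (simp_all add: right_diff_distrib mult.commute)
qed (simp_all add: labs_def less_le_not_le)

lemma scaleR_left_mono: "a \<le> b \<Longrightarrow> 0 \<le> r \<Longrightarrow> r *\<^sub>R a \<le> r *\<^sub>R (b::'a)"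
  using bal_scaleR_nonneg[of r "b - a"] by (simp add: scaleR_diff_right L.diff_ge_0_iff_ge)

lemma scaleR_right_mono: "r \<le> s \<Longrightarrow> 0 \<le> a \<Longrightarrow> r *\<^sub>R a \<le> s *\<^sub>R (a::'a)"
  using bal_scaleR_nonneg[of "s - r" a] by (simp add: scaleR_diff_left L.diff_ge_0_iff_ge)

lemma of_nat_eq_scaleR_one: "(of_nat n :: 'a) = real n *\<^sub>R 1"
  by (simp add: scaleR_conv_of_real)

lemma zero_le_one: "0 \<le> (1::'a)"
proof -
  obtain n :: nat where "- 1 \<le> (of_nat n :: 'a)" using bal_bounded by blast
  then have "0 \<le> (of_nat n :: 'a) - - 1" by (simp only: L.diff_ge_0_iff_ge)
  also have "(of_nat n :: 'a) - - 1 = of_nat (Suc n)" by simp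
  also have "\<dots> = real (Suc n) *\<^sub>R 1" by (rule of_nat_eq_scaleR_one)
  finally have "0 \<le> real (Suc n) *\<^sub>R (1::'a)" .
  then have "0 \<le> (1 / real (Suc n)) *\<^sub>R (real (Suc n) *\<^sub>R (1::'a))"
    by (rule bal_scaleR_nonneg[rotated]) simp
  then show ?thesis by simp
qed

lemma of_nat_mult_eq_scaleR: "of_nat n * a = real n *\<^sub>R (a::'a)"
  by (simp add: of_nat_eq_scaleR_one)

lemma of_nat_nonneg: "0 \<le> (of_nat n :: 'a)"
  unfolding of_nat_eq_scaleR_one using zero_le_one by (intro bal_scaleR_nonneg) simp_all

lemma inf_of_nat_mult_eq_0:
  assumes "0 \<le> p" "0 \<le> c" "inf p c = 0"
  shows "inf (of_nat n * p) (c::'a) = 0"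
proof (induction n)
  case 0
  show ?case using assms(2) by (simp add: inf_absorb1)
next
  case (Suc n)
  have "0 \<le> of_nat n * p" using of_nat_nonneg assms(1) by (rule L.mult_nonneg_nonneg)
  with assms have "inf (p + of_nat n * p) c = 0" using Suc.IH by (intro L.inf_add_eq_0[of p])
  then show ?case by (simp add: distrib_right)
qed

text \<open>Boundedness makes the algebra an f-ring.\<close>
lemma inf_mult_eq_0:
  assumes "0 \<le> p" "0 \<le> c" "inf p c = 0" "0 \<le> a"
  shows "inf (a * p) (c::'a) = 0"
proof -
  obtain n :: nat where "a \<le> of_nat n" using bal_bounded by blast
  then have "a * p \<le> of_nat n * p" using assms(1) by (rule L.mult_right_mono)
  moreover have "inf (of_nat n * p) c = 0" using assms(1-3) by (rule inf_of_nat_mult_eq_0)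
  moreover have "0 \<le> a * p" using assms(4,1) by (rule L.mult_nonneg_nonneg)
  ultimately show ?thesis using assms(2) by (intro L.inf_eq_0_if_le[of "a * p" "of_nat n * p"])
qed

lemma square_nonneg: "0 \<le> a * (a::'a)"
proof -
  define P N where "P = sup a 0" and "N = sup (- a) 0"
  have P: "0 \<le> P" and N: "0 \<le> N" and PN: "inf P N = 0"
    unfolding P_def N_def by (simp_all add: L.inf_pos_part_neg_part)
  have "inf (N * P) N = 0" using P N PN N by (rule inf_mult_eq_0)
  then have "inf (P * N) (N * P) = 0"
    using N P by (intro inf_mult_eq_0) (simp_all add: inf_commute L.mult_nonneg_nonneg)
  then have "P * N = 0" by (simp add: mult.commute)
  moreover have a: "a = P - N" unfolding P_def N_def by (rule L.pos_part_diff_neg_part[symmetric])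
  have "a * a = P * P + N * N - 2 * (P * N)" unfolding a by (simp add: algebra_simps)
  ultimately have "a * a = P * P + N * N" by simp
  then show ?thesis using P N by (simp add: L.add_nonneg_nonneg L.mult_nonneg_nonneg)
qed

lemma abs_mult_le_of_nat: "\<exists>n::nat. labs (a * z) \<le> of_nat n * labs (z::'a)"
proof -
  obtain n :: nat where n: "labs a \<le> of_nat n" using bal_bounded by blast
  have a: "a \<le> of_nat n" and ma: "- a \<le> of_nat n"
    using n L.abs_ge_self L.abs_ge_minus_self order_trans by blast+
  define P N where "P = sup z 0" and "N = sup (- z) 0"
  have P: "0 \<le> P" and N: "0 \<le> N" unfolding P_def N_def by simp_all
  have z: "z = P - N" unfolding P_def N_def by (rule L.pos_part_diff_neg_part[symmetric])
  have abs_z: "labs z = P + N" unfolding P_def N_def by (rule L.abs_eq_pos_part_add_neg_part)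
  have "a * z = a * P + (- a) * N" unfolding z by (simp add: algebra_simps)
  also have "\<dots> \<le> of_nat n * P + of_nat n * N"
    using a ma P N by (intro L.add_mono L.mult_right_mono)
  finally have "a * z \<le> of_nat n * labs z" by (simp only: abs_z distrib_left)
  moreover have "- (a * z) = (- a) * P + a * N" unfolding z by (simp add: algebra_simps)
  moreover have "\<dots> \<le> of_nat n * P + of_nat n * N"
    using a ma P N by (intro L.add_mono L.mult_right_mono)
  ultimately have "labs (a * z) \<le> of_nat n * labs z"
    unfolding labs_def[of "a * z"] by (intro sup_least) (simp_all only: abs_z distrib_left)
  then show ?thesis ..
qed

lemma scaleR_sup_distrib:
  assumes r: "0 < r"
  shows "r *\<^sub>R sup a b = sup (r *\<^sub>R a) (r *\<^sub>R (b::'a))"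
proof (rule order.antisym)
  show "sup (r *\<^sub>R a) (r *\<^sub>R b) \<le> r *\<^sub>R sup a b"
    using r by (intro sup_least scaleR_left_mono) simp_all
  define S where "S = sup (r *\<^sub>R a) (r *\<^sub>R b)"
  have "inverse r *\<^sub>R (r *\<^sub>R a) \<le> inverse r *\<^sub>R S"
    using r by (intro scaleR_left_mono) (simp_all add: S_def)
  moreover have "inverse r *\<^sub>R (r *\<^sub>R b) \<le> inverse r *\<^sub>R S"
    using r by (intro scaleR_left_mono) (simp_all add: S_def)
  ultimately have "sup a b \<le> inverse r *\<^sub>R S" using r by simp
  then have "r *\<^sub>R sup a b \<le> r *\<^sub>R (inverse r *\<^sub>R S)"
    using r by (intro scaleR_left_mono) simp_all
  then show "r *\<^sub>R sup a b \<le> S" using r by simp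
qed

lemma of_nat_mult_pos_part: "of_nat n * sup a 0 = sup (of_nat n * a) (0::'a)"
proof (cases "n = 0")
  case False
  then show ?thesis by (simp add: of_nat_mult_eq_scaleR scaleR_sup_distrib)
qed simp

lemma inf_pos_part_eq_0_if_archimedean:
  assumes p: "0 \<le> p" and H: "\<And>n::nat. n \<ge> 1 \<Longrightarrow> inf (sup (of_nat n * a - b) 0) p = 0"
  shows "inf (sup a 0) p = (0::'a)"
proof -
  define w where "w = inf (sup a 0) p"
  have w: "0 \<le> w" using p by (simp add: w_def)
  have "of_nat n * w \<le> sup b 0" if n: "n \<ge> 1" for n :: nat
  proof -
    text \<open>\<open>X\<close> is disjoint from \<open>p\<close> but dominated by \<open>n p\<close>, hence zero.\<close>
    define X where "X = sup (of_nat n * w - sup b 0) 0"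
    have nw: "0 \<le> of_nat n * w" using of_nat_nonneg w by (rule L.mult_nonneg_nonneg)
    have "of_nat n * w \<le> sup (of_nat n * a) 0"
      unfolding w_def of_nat_mult_pos_part[symmetric] by (intro L.mult_left_mono of_nat_nonneg) simp
    then have "of_nat n * w \<le> sup (of_nat n * a - b) 0 + sup b 0"
      using L.pos_part_le_pos_part_diff_add by (rule order_trans)
    then have "of_nat n * w - sup b 0 \<le> sup (of_nat n * a - b) 0"
      by (simp only: L.diff_le_eq)
    then have "X \<le> sup (of_nat n * a - b) 0" unfolding X_def by simp
    then have "inf X p = 0" using H[OF n] p by (intro L.inf_eq_0_if_le[of X]) (simp_all add: X_def)
    then have "inf X (of_nat n * p) = 0"
      using inf_of_nat_mult_eq_0[of p X n] p by (simp add: X_def inf_commute)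
    moreover have "X \<le> of_nat n * p"
    proof -
      have "X \<le> of_nat n * w" unfolding X_def using nw by (simp add: L.diff_le_eq L.add_increasing2)
      also have "\<dots> \<le> of_nat n * p" unfolding w_def by (intro L.mult_left_mono of_nat_nonneg) simp
      finally show ?thesis .
    qed
    ultimately have "X = 0" by (simp add: inf_absorb1)
    moreover have "of_nat n * w - sup b 0 \<le> X" unfolding X_def by (rule sup_ge1)
    ultimately show ?thesis by (simp only: L.diff_le_0_iff_le)
  qed
  then have "w \<le> 0" by (rule bal_archimedean)
  then show ?thesis using w unfolding w_def by (rule order.antisym)
qed

lemma add_mem_polar:
  assumes "a \<in> polar S" "b \<in> polar S"
  shows "a + b \<in> polar (S::'a set)"
  unfolding polar_def
proof (intro CollectI ballI)
  fix y assume "y \<in> S"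
  then have "inf (labs a + labs b) (labs y) = 0"
    using assms unfolding polar_def by (intro L.inf_add_eq_0 L.abs_ge_zero) auto
  then show "inf (labs (a + b)) (labs y) = 0"
    by (rule L.inf_eq_0_if_le[OF L.abs_ge_zero L.abs_triangle_ineq L.abs_ge_zero])
qed

lemma mult_mem_polar:
  assumes "b \<in> polar S"
  shows "a * b \<in> polar (S::'a set)"
  unfolding polar_def
proof (intro CollectI ballI)
  fix y assume "y \<in> S"
  obtain n where n: "labs (a * b) \<le> of_nat n * labs b" using abs_mult_le_of_nat by blast
  have "inf (of_nat n * labs b) (labs y) = 0"
    using assms \<open>y \<in> S\<close> unfolding polar_def by (intro inf_of_nat_mult_eq_0 L.abs_ge_zero) auto
  then show "inf (labs (a * b)) (labs y) = 0"
    by (rule L.inf_eq_0_if_le[OF L.abs_ge_zero n L.abs_ge_zero])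
qed

lemma pos_part_mem_polar:
  assumes "\<And>n::nat. n \<ge> 1 \<Longrightarrow> sup (of_nat n * a - b) 0 \<in> polar S"
  shows "sup a 0 \<in> polar (S::'a set)"
  unfolding polar_def
proof (intro CollectI ballI)
  fix y assume "y \<in> S"
  have "inf (sup (of_nat n * a - b) 0) (labs y) = 0" if "n \<ge> 1" for n :: nat
  proof -
    have "inf (labs (sup (of_nat n * a - b) 0)) (labs y) = 0"
      using assms[OF that] \<open>y \<in> S\<close> unfolding polar_def by blast
    then show ?thesis by (simp only: L.abs_of_nonneg[OF sup_ge2])
  qed
  then have "inf (sup a 0) (labs y) = 0"
    by (rule inf_pos_part_eq_0_if_archimedean[OF L.abs_ge_zero])
  then show "inf (labs (sup a 0)) (labs y) = 0" by (simp only: L.abs_of_nonneg[OF sup_ge2])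
qed

lemma arch_ideal_polar: "arch_ideal (polar (S::'a set))"
  unfolding arch_ideal_def l_ideal_def
proof (intro conjI allI ballI impI)
  show "0 \<in> polar S" unfolding polar_def using L.abs_ge_zero by (simp add: inf_absorb1)
  show "- a \<in> polar S" if "a \<in> polar S" for a
    using that by (simp add: polar_def L.abs_minus_cancel)
  show "a \<in> polar S" if "labs a \<le> labs b \<and> b \<in> polar S" for a b
    using that L.inf_eq_0_if_le[OF L.abs_ge_zero _ L.abs_ge_zero] unfolding polar_def by blast
  show "sup a 0 \<in> polar S" if "\<forall>n::nat. n \<ge> 1 \<longrightarrow> sup (of_nat n * a - b) 0 \<in> polar S" for a b
    using that by (intro pos_part_mem_polar[of a b]) blast
qed (simp_all add: add_mem_polar mult_mem_polar)

lemma polar_Int_polar_polar: "z \<in> polar S \<Longrightarrow> z \<in> polar (polar S) \<Longrightarrow> z = (0::'a)"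
proof -
  assume "z \<in> polar S" "z \<in> polar (polar S)"
  then have "inf (labs z) (labs z) = 0" unfolding polar_def by blast
  then show "z = 0" by (simp only: inf.idem L.abs_eq_0)
qed

lemma arch_ideal_UNIV: "arch_ideal (UNIV::'a set)"
  unfolding arch_ideal_def l_ideal_def by simp

lemma arch_ideal_zero: "arch_ideal {0::'a}"
  unfolding arch_ideal_def l_ideal_def
proof (intro conjI allI ballI impI)
  fix a b :: 'a assume H: "labs a \<le> labs b \<and> b \<in> {0}"
  then have "b = 0" by simp
  with H have "labs a \<le> labs 0" by (simp only:)
  then show "a \<in> {0}" by (simp only: L.abs_zero L.abs_le_zero_iff singleton_iff)
next
  fix a b :: 'a assume H: "\<forall>n::nat. n \<ge> 1 \<longrightarrow> sup (of_nat n * a - b) 0 \<in> {0}"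
  have "of_nat n * a \<le> b" if "n \<ge> 1" for n :: nat
  proof -
    have "of_nat n * a - b \<le> sup (of_nat n * a - b) 0" by (rule sup_ge1)
    also have "\<dots> = 0" using H that by blast
    finally show ?thesis by (simp only: L.diff_le_0_iff_le)
  qed
  then have "a \<le> 0" by (rule bal_archimedean)
  then show "sup a 0 \<in> {0}" by (simp add: sup_absorb2)
qed simp_all

lemma arch_ideal_Inter: "(\<And>K. K \<in> F \<Longrightarrow> arch_ideal K) \<Longrightarrow> arch_ideal (\<Inter>F :: 'a set)"
  unfolding arch_ideal_def l_ideal_def by (intro conjI allI ballI impI; blast)

lemma arch_ideal_Int: "arch_ideal K \<Longrightarrow> arch_ideal L \<Longrightarrow> arch_ideal (K \<inter> L :: 'a set)"
  using arch_ideal_Inter[of "{K, L}"] by auto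

lemma arch_ideal_arch_join: "arch_ideal (arch_join J (K::'a set))"
  unfolding arch_join_def by (rule arch_ideal_Inter) simp

lemma arch_join_eq_UNIV_if_one_le:
  assumes "a \<in> J" "b \<in> K" "1 \<le> a + b"
  shows "arch_join J K = (UNIV::'a set)"
proof -
  have "M = UNIV" if M: "arch_ideal M" "J \<union> K \<subseteq> M" for M
  proof -
    have "a + b \<in> M" using M assms unfolding arch_ideal_def l_ideal_def by blast
    moreover have "labs 1 \<le> labs (a + b)"
      using assms(3) zero_le_one by (simp add: L.abs_of_nonneg order_trans[OF zero_le_one])
    ultimately have "1 \<in> M" using M unfolding arch_ideal_def l_ideal_def by blast
    then have "c * 1 \<in> M" for c using M unfolding arch_ideal_def l_ideal_def by blast
    then show ?thesis by auto
  qed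
  then show ?thesis unfolding arch_join_def by blast
qed

lemma l_ideal_abs_iff: "l_ideal I \<Longrightarrow> labs a \<in> I \<longleftrightarrow> (a::'a) \<in> I"
  unfolding l_ideal_def by (metis L.abs_idempotent order_refl)

lemma arch_ideal_regular:
  assumes K: "arch_ideal K" and L: "arch_ideal L" and KL: "\<not> K \<subseteq> (L::'a set)"
  obtains J J' where "arch_ideal J" "arch_ideal J'" "J \<inter> J' \<subseteq> {0}" "J' \<subseteq> K" "\<not> J' \<subseteq> L"
    "arch_join J K = UNIV"
proof -
  have lK: "l_ideal K" and lL: "l_ideal L" using K L by (simp_all add: arch_ideal_def)
  obtain a where a: "a \<in> K" "a \<notin> L" using KL by blast
  define m where "m = labs a"
  have m: "0 \<le> m" "m \<in> K" "m \<notin> L"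
    using a lK lL L.abs_ge_zero by (simp_all add: m_def l_ideal_abs_iff)
  obtain n :: nat where "sup (of_nat n * m - 1) 0 \<notin> L"
  proof -
    have "sup m 0 \<notin> L" using m by (simp add: sup_absorb1)
    then show ?thesis using L that unfolding arch_ideal_def by blast
  qed
  text \<open>The witnesses are the polar \<open>J\<close> of \<open>p = (n m - 1)\<^sup>+\<close> and the part of \<open>K\<close>
    in its bipolar.\<close>
  define p q where "p = sup (of_nat n * m - 1) 0" and "q = sup (- (of_nat n * m - 1)) 0"
  have p: "0 \<le> p" "p \<notin> L" unfolding p_def using \<open>sup (of_nat n * m - 1) 0 \<notin> L\<close> by simp_all
  have nm: "0 \<le> of_nat n * m" "of_nat n * m \<in> K"
    using m lK L.mult_nonneg_nonneg[OF of_nat_nonneg] unfolding l_ideal_def by blast+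
  have "p \<le> of_nat n * m"
    unfolding p_def using zero_le_one nm(1) by (simp add: L.diff_le_eq L.add_increasing2)
  then have "p \<in> K" using lK nm p(1) unfolding l_ideal_def by (metis L.abs_of_nonneg)
  moreover have "p \<in> polar (polar {p})" by (simp add: polar_def inf_commute)
  ultimately have pJ': "p \<in> K \<inter> polar (polar {p})" by blast
  have "inf q p = 0" unfolding p_def q_def by (subst inf_commute) (rule L.inf_pos_part_neg_part)
  then have "q \<in> polar {p}" using p(1) by (simp add: polar_def L.abs_of_nonneg q_def)
  moreover have "1 \<le> q + of_nat n * m"
  proof -
    have "(1::'a) = - (of_nat n * m - 1) + of_nat n * m" by simp
    also have "\<dots> \<le> q + of_nat n * m" unfolding q_def by (rule L.add_right_mono[OF sup_ge1])
    finally show ?thesis .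
  qed
  ultimately have "arch_join (polar {p}) K = UNIV"
    using nm(2) by (intro arch_join_eq_UNIV_if_one_le)
  moreover have "polar {p} \<inter> (K \<inter> polar (polar {p})) \<subseteq> {0}"
    using polar_Int_polar_polar by blast
  ultimately show ?thesis
    using that[of "polar {p}" "K \<inter> polar (polar {p})"] pJ' p(2) K
    by (meson Int_lower1 arch_ideal_Int arch_ideal_polar subset_eq)
qed

lemma bdd_above_scaleR_le:
  assumes v: "0 \<le> v" "v \<noteq> 0"
  shows "bdd_above {r. 0 \<le> r \<and> r *\<^sub>R v \<le> (f::'a)}"
proof (rule ccontr)
  assume unbounded: "\<not> ?thesis"
  have "of_nat n * v \<le> f" for n :: nat
  proof -
    from unbounded have "\<exists>r\<in>{r. 0 \<le> r \<and> r *\<^sub>R v \<le> f}. \<not> r \<le> real n"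
      unfolding bdd_above_def by blast
    then obtain r where r: "0 \<le> r" "r *\<^sub>R v \<le> f" "real n \<le> r" by auto
    have "of_nat n * v = real n *\<^sub>R v" by (rule of_nat_mult_eq_scaleR)
    also have "\<dots> \<le> r *\<^sub>R v" using r(3) v(1) by (rule scaleR_right_mono)
    finally show ?thesis using r(2) by (rule order_trans)
  qed
  then have "v \<le> 0" by (rule bal_archimedean)
  then show False using v by simp
qed

lemma Sup_scaleR_le:
  assumes v: "0 \<le> v" and f: "0 \<le> f" and bdd: "bdd_above {r. 0 \<le> r \<and> r *\<^sub>R v \<le> f}"
  shows "Sup {r. 0 \<le> r \<and> r *\<^sub>R v \<le> f} *\<^sub>R v \<le> (f::'a)"
proof -
  define R where "R = {r. 0 \<le> r \<and> r *\<^sub>R v \<le> f}"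
  have "0 \<in> R" using f by (simp add: R_def)
  have "of_nat k * (Sup R *\<^sub>R v - f) \<le> v" if k: "k \<ge> 1" for k :: nat
  proof -
    have "Sup R - 1 / real k < Sup R" using k by simp
    then obtain r where r: "r \<in> R" "Sup R - 1 / real k < r"
      using less_cSup_iff[of R] \<open>0 \<in> R\<close> bdd unfolding R_def by blast
    have "Sup R *\<^sub>R v - f \<le> Sup R *\<^sub>R v - r *\<^sub>R v"
      using r(1) by (simp add: R_def L.diff_left_mono)
    also have "\<dots> = (Sup R - r) *\<^sub>R v" by (simp add: scaleR_left_diff_distrib)
    also have "\<dots> \<le> (1 / real k) *\<^sub>R v" using r(2) v by (intro scaleR_right_mono) simp_all
    finally have "real k *\<^sub>R (Sup R *\<^sub>R v - f) \<le> real k *\<^sub>R ((1 / real k) *\<^sub>R v)"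
      by (intro scaleR_left_mono) simp_all
    then show ?thesis using k by (simp add: of_nat_mult_eq_scaleR)
  qed
  then have "Sup R *\<^sub>R v - f \<le> 0" by (rule bal_archimedean)
  then show ?thesis unfolding R_def by (simp only: L.diff_le_0_iff_le)
qed

end

inductive_set basic_sups :: "('a::{comm_ring_1, lattice} set \<Rightarrow> 'b::boolean_algebra) \<Rightarrow> 'b set"
  for emb where
  bot: "bot \<in> basic_sups emb"
| basic: "K \<in> Arch \<Longrightarrow> L \<in> Arch \<Longrightarrow> inf (emb K) (- emb L) \<in> basic_sups emb"
| sup: "a \<in> basic_sups emb \<Longrightarrow> b \<in> basic_sups emb \<Longrightarrow> sup a b \<in> basic_sups emb"

locale bal_free_bool_ext = bal TA for TA :: "'a::{comm_ring_1, real_algebra_1, lattice} itself" +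
  fixes emb :: "'a set \<Rightarrow> 'b::boolean_algebra"
  assumes free: "free_bool_ext emb"
begin

lemma emb_inj: "I \<in> Arch \<Longrightarrow> J \<in> Arch \<Longrightarrow> emb I = emb J \<Longrightarrow> I = J"
  using free unfolding free_bool_ext_def inj_on_def by blast

lemma emb_zero: "emb {0} = bot"
  and emb_UNIV: "emb UNIV = top"
  and emb_Int: "I \<in> Arch \<Longrightarrow> J \<in> Arch \<Longrightarrow> emb (I \<inter> J) = inf (emb I) (emb J)"
  and emb_arch_join: "I \<in> Arch \<Longrightarrow> J \<in> Arch \<Longrightarrow> emb (arch_join I J) = sup (emb I) (emb J)"
  and bool_gen_emb: "bool_gen (emb ` Arch) = UNIV"
  using free unfolding free_bool_ext_def by blast+

lemma Arch_UNIV: "UNIV \<in> (Arch :: 'a set set)"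
  and Arch_zero: "{0} \<in> (Arch :: 'a set set)"
  and Arch_Int: "I \<in> Arch \<Longrightarrow> J \<in> Arch \<Longrightarrow> I \<inter> J \<in> (Arch :: 'a set set)"
  and Arch_arch_join: "arch_join I J \<in> (Arch :: 'a set set)"
  by (simp_all add: Arch_def arch_ideal_UNIV arch_ideal_zero arch_ideal_Int arch_ideal_arch_join)

lemma emb_le_iff: "I \<in> Arch \<Longrightarrow> J \<in> Arch \<Longrightarrow> emb I \<le> emb J \<longleftrightarrow> I \<subseteq> J"
  by (metis Arch_Int Int_absorb2 emb_Int emb_inj inf.absorb_iff2 inf_commute le_iff_inf)

lemma arch_join_eq_UNIV_iff:
  "I \<in> Arch \<Longrightarrow> J \<in> Arch \<Longrightarrow> arch_join I J = UNIV \<longleftrightarrow> - emb I \<le> emb J"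
  by (metis Arch_UNIV Arch_arch_join emb_UNIV emb_arch_join emb_inj sup_shunt)

lemma basic_sups_inf: "a \<in> basic_sups emb \<Longrightarrow> b \<in> basic_sups emb \<Longrightarrow> inf a b \<in> basic_sups emb"
proof (induction a rule: basic_sups.induct)
  case (basic K L)
  from basic.prems show ?case
  proof (induction b rule: basic_sups.induct)
    case (basic K' L')
    have "inf (inf (emb K) (- emb L)) (inf (emb K') (- emb L'))
        = inf (emb (K \<inter> K')) (- emb (arch_join L L'))"
      using basic.hyps \<open>K \<in> Arch\<close> \<open>L \<in> Arch\<close>
      by (simp add: emb_Int emb_arch_join inf_commute inf_left_commute)
    then show ?case
      using basic.hyps \<open>K \<in> Arch\<close> by (simp add: Arch_Int Arch_arch_join basic_sups.basic)
  qed (simp_all add: basic_sups.bot inf_sup_distrib1 basic_sups.sup)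
qed (simp_all add: basic_sups.bot inf_sup_distrib2 basic_sups.sup)

lemma basic_sups_UNIV: "basic_sups emb = UNIV"
proof -
  have "b \<in> basic_sups emb \<and> - b \<in> basic_sups emb" if "b \<in> bool_gen (emb ` Arch)" for b
    using that
  proof (induction b rule: bool_gen.induct)
    case (base g)
    then obtain I where "I \<in> Arch" "g = emb I" by blast
    then show ?case
      using basic_sups.basic[of I "{0}" emb] basic_sups.basic[of UNIV I emb] Arch_zero Arch_UNIV
      by (simp add: emb_zero emb_UNIV)
  next
    case bot
    show ?case using basic_sups.basic[OF Arch_UNIV Arch_zero, of emb] by (simp add: emb_zero emb_UNIV basic_sups.bot)
  next
    case top
    show ?case using basic_sups.basic[OF Arch_UNIV Arch_zero, of emb] by (simp add: emb_zero emb_UNIV basic_sups.bot)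
  qed (simp_all add: basic_sups_inf basic_sups.sup)
  then show ?thesis using bool_gen_emb by blast
qed

lemma basic_below:
  assumes "b \<noteq> bot"
  obtains K L where "K \<in> Arch" "L \<in> Arch" "inf (emb K) (- emb L) \<noteq> bot" "inf (emb K) (- emb L) \<le> b"
proof -
  have "b \<in> basic_sups emb" by (simp add: basic_sups_UNIV)
  then have "\<exists>K L. K \<in> Arch \<and> L \<in> Arch \<and>
      inf (emb K) (- emb L) \<noteq> bot \<and> inf (emb K) (- emb L) \<le> b"
    using assms
  proof (induction b rule: basic_sups.induct)
    case (basic K L)
    then show ?case by blast
  next
    case (sup a b)
    then show ?case by (cases "a = bot") (auto intro: le_supI1 le_supI2)
  qed simp
  then show ?thesis using that by blast
qed

lemma compl_emb_dense:
  assumes "g \<noteq> bot"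
  obtains I where "I \<in> Arch" "- emb I \<noteq> bot" "- emb I \<le> g"
proof -
  obtain K L where KL: "K \<in> Arch" "L \<in> Arch" "inf (emb K) (- emb L) \<noteq> bot"
    "inf (emb K) (- emb L) \<le> g"
    using basic_below[OF assms] by blast
  then have "\<not> K \<subseteq> L" by (simp add: emb_le_iff[symmetric] inf_shunt)
  then obtain J J' where J: "arch_ideal J" "arch_ideal J'" "J \<inter> J' \<subseteq> {0}" "J' \<subseteq> K"
    "\<not> J' \<subseteq> L" "arch_join J K = UNIV"
    using arch_ideal_regular KL(1,2) unfolding Arch_def by blast
  have JA: "J \<in> Arch" "J' \<in> Arch" using J(1,2) by (simp_all add: Arch_def)
  have "J \<inter> J' = {0}" using J(1-3) unfolding arch_ideal_def l_ideal_def by blast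
  then have "inf (emb J') (emb J) = bot" using emb_Int[OF JA(2,1)] by (simp add: emb_zero Int_commute)
  then have "emb J' \<le> - emb J" by (simp add: inf_shunt)
  moreover have "inf (emb J') (- emb L) \<noteq> bot"
    using J(5) JA KL(2) by (simp add: emb_le_iff[symmetric] inf_shunt)
  moreover have "- emb J \<le> emb K" using J(6) JA KL(1) by (simp add: arch_join_eq_UNIV_iff)
  moreover have I: "- emb (arch_join J L) = inf (- emb J) (- emb L)"
    using JA KL(2) by (simp add: emb_arch_join)
  ultimately have "inf (emb J') (- emb L) \<le> - emb (arch_join J L)"
    and "- emb (arch_join J L) \<le> inf (emb K) (- emb L)"
    and "inf (emb J') (- emb L) \<noteq> bot"
    by (auto intro: le_infI1 order_trans)
  then have "- emb (arch_join J L) \<noteq> bot" and "- emb (arch_join J L) \<le> g"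
    using KL(4) by (metis le_bot, metis order_trans)
  then show ?thesis using that Arch_arch_join by blast
qed

end

locale bal_completion =
  fixes x :: "'b::boolean_algebra \<Rightarrow> 'd::{comm_ring_1, real_algebra_1, lattice}"
  assumes completion: "dedekind_completion_RB x"
begin

sublocale D: bal "TYPE('d)"
  using completion by unfold_locales (simp add: dedekind_completion_RB_def)

lemma x_inf: "x (inf e f) = x e * x f"
  and x_compl: "x (- e) = 1 - x e"
  and x_bot: "x bot = 0"
  and x_eq_0_imp: "x e = 0 \<Longrightarrow> e = bot"
  and join_of_RB_image: "\<exists>S \<subseteq> RB_image x. is_join S w"
  using completion unfolding dedekind_completion_RB_def by blast+

lemma x_top: "x top = 1"
  using x_compl[of bot] x_bot by simp

lemma x_idem: "x e * x e = x e"
  using x_inf[of e e] by simp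

lemma x_nonneg: "0 \<le> x e"
  using D.square_nonneg[of "x e"] by (simp add: x_idem)

lemma x_mult_of_le: "g \<le> e \<Longrightarrow> x e * x g = x g"
  by (simp add: x_inf[symmetric] inf_absorb2)

lemma x_mult_eq_0: "inf e g = bot \<Longrightarrow> x e * x g = 0"
  by (simp add: x_inf[symmetric] x_bot)

lemma x_split: "x h = x (inf h e) + x (inf h (- e))"
  by (simp add: x_inf x_compl algebra_simps)

lemma x_mono: "e \<le> f \<Longrightarrow> x e \<le> x f"
  using x_split[of f e] x_nonneg[of "inf f (- e)"] by (simp add: inf_absorb2)

lemma x_le_one: "x e \<le> 1"
  using x_mono[of e top] by (simp add: x_top)

lemma mult_x_le: "0 \<le> w \<Longrightarrow> w * x e \<le> w"
  using D.L.mult_left_mono[OF x_le_one, of w e] by simp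

lemma scaleR_x_le_mult_x: "d *\<^sub>R x h \<le> w \<Longrightarrow> d *\<^sub>R x h \<le> w * x h"
  using D.L.mult_right_mono[OF _ x_nonneg, of "d *\<^sub>R x h" w h] by (simp add: x_idem)

lemma bot_if_scaleR_x_le_0: "0 < d \<Longrightarrow> d *\<^sub>R x h \<le> 0 \<Longrightarrow> h = bot"
  using D.scaleR_left_mono[of "d *\<^sub>R x h" 0 "inverse d"] x_nonneg[of h]
  by (intro x_eq_0_imp order.antisym) simp_all

lemma mult_x_le_split:
  assumes "y * x (inf h e) \<le> t *\<^sub>R x (inf h e)" "y * x (inf h (- e)) \<le> t *\<^sub>R x (inf h (- e))"
  shows "y * x h \<le> t *\<^sub>R x h"
  using D.L.add_mono[OF assms] x_split[of h e] by (simp add: distrib_left scaleR_add_right)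

definition exceeds_below :: "'d \<Rightarrow> 'b \<Rightarrow> real \<Rightarrow> bool" where
  "exceeds_below s h t \<longleftrightarrow> (\<exists>g\<le>h. g \<noteq> bot \<and> (\<exists>d>t. s * x g = d *\<^sub>R x g))"

lemma add_scaleR_x_dichotomy:
  assumes IH: "\<And>h t. s * x h \<le> t *\<^sub>R x h \<or> exceeds_below s h t"
  shows "(c *\<^sub>R x e + s) * x h \<le> t *\<^sub>R x h \<or> exceeds_below (c *\<^sub>R x e + s) h t"
proof -
  have on_e: "(c *\<^sub>R x e + s) * x g = c *\<^sub>R x g + s * x g" if "g \<le> e" for g
    using that x_mult_of_le by (simp add: distrib_right)
  have off_e: "(c *\<^sub>R x e + s) * x g = s * x g" if "g \<le> - e" for g
  proof -
    have "x e * x g = 0" using that by (intro x_mult_eq_0) (simp add: inf_shunt compl_le_swap1)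
    then show ?thesis by (simp add: distrib_right)
  qed
  consider "s * x (inf h e) \<le> (t - c) *\<^sub>R x (inf h e)" "s * x (inf h (- e)) \<le> t *\<^sub>R x (inf h (- e))"
    | g d where "g \<le> inf h e" "g \<noteq> bot" "d > t - c" "s * x g = d *\<^sub>R x g"
    | g d where "g \<le> inf h (- e)" "g \<noteq> bot" "d > t" "s * x g = d *\<^sub>R x g"
    using IH[of "inf h e" "t - c"] IH[of "inf h (- e)" t] unfolding exceeds_below_def by blast
  then show ?thesis
  proof cases
    case 1
    have "(c *\<^sub>R x e + s) * x (inf h e) = c *\<^sub>R x (inf h e) + s * x (inf h e)" by (simp add: on_e)
    also have "\<dots> \<le> c *\<^sub>R x (inf h e) + (t - c) *\<^sub>R x (inf h e)"
      using 1(1) by (rule D.L.add_left_mono)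
    also have "\<dots> = t *\<^sub>R x (inf h e)" by (simp add: scaleR_left_diff_distrib)
    finally have "(c *\<^sub>R x e + s) * x (inf h e) \<le> t *\<^sub>R x (inf h e)" .
    moreover have "(c *\<^sub>R x e + s) * x (inf h (- e)) \<le> t *\<^sub>R x (inf h (- e))"
      using 1(2) off_e by simp
    ultimately show ?thesis by (blast intro: mult_x_le_split)
  next
    case (2 g d)
    then have "(c *\<^sub>R x e + s) * x g = (c + d) *\<^sub>R x g" by (simp add: on_e scaleR_add_left)
    then show ?thesis using 2 unfolding exceeds_below_def
      by (intro disjI2 exI[of _ g]) (auto intro!: exI[of _ "c + d"])
  next
    case (3 g d)
    then have "(c *\<^sub>R x e + s) * x g = d *\<^sub>R x g" by (simp add: off_e)
    then show ?thesis using 3 unfolding exceeds_below_def by (intro disjI2 exI[of _ g]) auto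
  qed
qed

lemma sum_x_dichotomy:
  "finite F \<Longrightarrow>
    (\<Sum>e\<in>F. c e *\<^sub>R x e) * x h \<le> t *\<^sub>R x h \<or> exceeds_below (\<Sum>e\<in>F. c e *\<^sub>R x e) h t"
proof (induction F arbitrary: h t rule: finite_induct)
  case empty
  show ?case
  proof (cases "0 \<le> t \<or> h = bot")
    case True
    then show ?thesis using D.bal_scaleR_nonneg[OF _ x_nonneg] by (auto simp: x_bot)
  next
    case False
    then show ?thesis unfolding exceeds_below_def by (intro disjI2 exI[of _ h]) (auto intro!: exI[of _ 0])
  qed
next
  case (insert e F)
  then show ?case by (simp add: add_scaleR_x_dichotomy)
qed

lemma exists_scaleR_x_le:
  assumes "0 \<le> w" "\<not> w \<le> 0"
  obtains g d where "g \<noteq> bot" "0 < d" "d *\<^sub>R x g \<le> w"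
proof -
  obtain S where S: "S \<subseteq> RB_image x" "is_join S w" using join_of_RB_image by blast
  then obtain s where s: "s \<in> S" "\<not> s \<le> 0"
    using assms(2) unfolding is_join_def by blast
  then obtain F c where "finite F" and s_eq: "s = (\<Sum>e\<in>F. c e *\<^sub>R x e)"
    using S(1) unfolding RB_image_def by blast
  then obtain g d where g: "g \<noteq> bot" "0 < d" "s * x g = d *\<^sub>R x g"
    using sum_x_dichotomy[of F c top 0] s(2) by (auto simp: x_top exceeds_below_def)
  have "d *\<^sub>R x g = s * x g" using g(3) by simp
  also have "\<dots> \<le> w * x g"
    using S(2) s(1) x_nonneg unfolding is_join_def by (blast intro: D.L.mult_right_mono)
  also have "\<dots> \<le> w" using assms(1) by (rule mult_x_le)
  finally show ?thesis using that g by blast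
qed

lemma le_if_scaleR_x_le_x:
  assumes "0 < d" "d *\<^sub>R x h \<le> x e"
  shows "h \<le> e"
proof -
  have "d *\<^sub>R x (inf h (- e)) = (d *\<^sub>R x h) * x (- e)" by (simp add: x_inf)
  also have "\<dots> \<le> x e * x (- e)" using assms(2) x_nonneg by (rule D.L.mult_right_mono)
  also have "\<dots> = 0" by (simp add: x_mult_eq_0)
  finally have "inf h (- e) = bot" by (rule bot_if_scaleR_x_le_0[OF assms(1)])
  then show ?thesis by (simp add: inf_shunt)
qed

text \<open>The guard avoids the junk value of \<open>Sup\<close> on the unbounded set \<open>{r. 0 \<le> r}\<close>.\<close>
definition max_scale :: "'d \<Rightarrow> 'b \<Rightarrow> real" where
  "max_scale f e = (if x e = 0 then 0 else Sup {r. 0 \<le> r \<and> r *\<^sub>R x e \<le> f})"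

lemma max_scale_nonneg: "0 \<le> f \<Longrightarrow> 0 \<le> max_scale f e"
  unfolding max_scale_def
  using D.bdd_above_scaleR_le[OF x_nonneg, of e f] by (auto intro: cSup_upper)

lemma max_scale_scaleR_le: "0 \<le> f \<Longrightarrow> max_scale f e *\<^sub>R x e \<le> f"
  unfolding max_scale_def
  using D.Sup_scaleR_le[OF x_nonneg _ D.bdd_above_scaleR_le[OF x_nonneg]] by simp

lemma le_max_scale: "x e \<noteq> 0 \<Longrightarrow> 0 \<le> r \<Longrightarrow> r *\<^sub>R x e \<le> f \<Longrightarrow> r \<le> max_scale f e"
  unfolding max_scale_def
  using D.bdd_above_scaleR_le[OF x_nonneg, of e f] by (auto intro: cSup_upper)

end

locale arch_completion = bal_free_bool_ext TA emb + bal_completion x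
  for TA :: "'a::{comm_ring_1, real_algebra_1, lattice} itself"
    and emb :: "'a set \<Rightarrow> 'b::boolean_algebra"
    and x :: "'b \<Rightarrow> 'd::{comm_ring_1, real_algebra_1, lattice}"
begin

lemma nonpos_if_no_compl_step_below:
  assumes w: "0 \<le> w"
    and no_step: "\<And>I d. I \<in> Arch \<Longrightarrow> - emb I \<noteq> bot \<Longrightarrow> 0 < d \<Longrightarrow>
      d *\<^sub>R x (- emb I) \<le> w \<Longrightarrow> False"
  shows "w \<le> 0"
proof (rule ccontr)
  assume "\<not> w \<le> 0"
  then obtain g d where g: "g \<noteq> bot" "0 < d" "d *\<^sub>R x g \<le> w"
    using exists_scaleR_x_le w by blast
  obtain I where I: "I \<in> Arch" "- emb I \<noteq> bot" "- emb I \<le> g"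
    using compl_emb_dense[OF g(1)] by blast
  have "d *\<^sub>R x (- emb I) = (d *\<^sub>R x g) * x (- emb I)" using x_mult_of_le[OF I(3)] by simp
  also have "\<dots> \<le> w * x (- emb I)" using g(3) x_nonneg by (rule D.L.mult_right_mono)
  also have "\<dots> \<le> w" using w by (rule mult_x_le)
  finally show False using no_step I g(2) by blast
qed

lemma x_emb_is_join:
  assumes I: "I \<in> Arch"
  shows "is_join {x (- emb J) | J. J \<in> Arch \<and> arch_join J I = UNIV} (x (emb I))"
  unfolding is_join_def
proof (intro conjI ballI allI impI)
  fix s assume "s \<in> {x (- emb J) | J. J \<in> Arch \<and> arch_join J I = UNIV}"
  then show "s \<le> x (emb I)" using I by (auto simp: arch_join_eq_UNIV_iff intro: x_mono)
next
  fix u assume u: "\<forall>s\<in>{x (- emb J) | J. J \<in> Arch \<and> arch_join J I = UNIV}. s \<le> u"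
  have bound: "x (- emb J) \<le> u" if "J \<in> Arch" "- emb J \<le> emb I" for J
  proof -
    have "arch_join J I = UNIV" using that I by (simp add: arch_join_eq_UNIV_iff)
    then show ?thesis using u that(1) by blast
  qed
  have "0 \<le> u" using bound[OF Arch_UNIV] by (simp add: emb_UNIV x_bot)
  define e where "e = x (emb I)"
  define w where "w = e - inf u e"
  have "w \<le> 0"
  proof (rule nonpos_if_no_compl_step_below)
    show "0 \<le> w" unfolding w_def by (simp only: D.L.diff_ge_0_iff_ge inf_le2)
    fix J d assume J: "J \<in> Arch" "- emb J \<noteq> bot" "0 < d" and step: "d *\<^sub>R x (- emb J) \<le> w"
    have "w \<le> e"
      unfolding w_def using \<open>0 \<le> u\<close> x_nonneg by (simp add: e_def D.L.diff_le_eq D.L.add_increasing2)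
    then have "- emb J \<le> emb I"
      using J(3) step unfolding e_def by (blast intro: le_if_scaleR_x_le_x order_trans)
    then have "x (- emb J) \<le> inf u e" using bound J(1) x_mono unfolding e_def by simp
    then have "x (- emb J) \<le> inf u e * x (- emb J)" by (rule scaleR_x_le_mult_x[of 1, simplified])
    then have "x (- emb J) - inf u e * x (- emb J) \<le> 0" by (simp only: D.L.diff_le_0_iff_le)
    moreover have "d *\<^sub>R x (- emb J) \<le> x (- emb J) - inf u e * x (- emb J)"
      using scaleR_x_le_mult_x[OF step]
      unfolding w_def left_diff_distrib e_def x_mult_of_le[OF \<open>- emb J \<le> emb I\<close>] .
    ultimately have "d *\<^sub>R x (- emb J) \<le> 0" by (rule order_trans[rotated])
    then show False using J(2,3) bot_if_scaleR_x_le_0 by blast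
  qed
  then have "e \<le> inf u e" unfolding w_def by (simp only: D.L.diff_le_0_iff_le)
  then show "x (emb I) \<le> u" by (simp add: e_def)
qed

lemma nonneg_is_join_compl:
  assumes f: "0 \<le> f"
  shows "is_join {max_scale f (- emb I) *\<^sub>R x (- emb I) | I. I \<in> Arch} f"
  unfolding is_join_def
proof (intro conjI ballI allI impI)
  fix s assume "s \<in> {max_scale f (- emb I) *\<^sub>R x (- emb I) | I. I \<in> Arch}"
  then show "s \<le> f" using max_scale_scaleR_le[OF f] by auto
next
  fix u assume u: "\<forall>s\<in>{max_scale f (- emb I) *\<^sub>R x (- emb I) | I. I \<in> Arch}. s \<le> u"
  define w where "w = f - inf u f"
  have "w \<le> 0"
  proof (rule nonpos_if_no_compl_step_below)
    show "0 \<le> w" unfolding w_def by (simp only: D.L.diff_ge_0_iff_ge inf_le2)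
    fix I d assume I: "I \<in> Arch" "- emb I \<noteq> bot" "0 < d" and step: "d *\<^sub>R x (- emb I) \<le> w"
    define h m where "h = - emb I" and "m = max_scale f h"
    have "m *\<^sub>R x h \<le> inf u f" using u I(1) max_scale_scaleR_le[OF f] by (auto simp: h_def m_def)
    then have "m *\<^sub>R x h \<le> inf u f * x h" by (rule scaleR_x_le_mult_x)
    moreover have "d *\<^sub>R x h \<le> f * x h - inf u f * x h"
      using scaleR_x_le_mult_x[OF step] unfolding w_def h_def left_diff_distrib .
    ultimately have "(m + d) *\<^sub>R x h \<le> f * x h"
      using D.L.add_mono by (fastforce simp: scaleR_add_left)
    also have "\<dots> \<le> f" using f by (rule mult_x_le)
    finally have "m + d \<le> m"
      using I(2) x_eq_0_imp max_scale_nonneg[OF f] I(3) unfolding m_def h_def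
      by (intro le_max_scale) auto
    then show False using I(3) by simp
  qed
  then have "f \<le> inf u f" unfolding w_def by (simp only: D.L.diff_le_0_iff_le)
  then show "f \<le> u" by simp
qed

lemma join_add_const:
  assumes t: "0 \<le> t" and r: "\<forall>I\<in>Arch. 0 \<le> r I"
    and f: "is_join {r I *\<^sub>R x (- emb I) | I. I \<in> Arch} f"
  shows "is_join {(t + r I) *\<^sub>R x (- emb I) | I. I \<in> Arch} (f + t *\<^sub>R 1)"
  unfolding is_join_def
proof (intro conjI ballI allI impI)
  fix s assume "s \<in> {(t + r I) *\<^sub>R x (- emb I) | I. I \<in> Arch}"
  then obtain I where I: "I \<in> Arch" "s = (t + r I) *\<^sub>R x (- emb I)" by blast
  have "t *\<^sub>R x (- emb I) \<le> t *\<^sub>R 1" using x_le_one t by (rule D.scaleR_left_mono)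
  moreover have "r I *\<^sub>R x (- emb I) \<le> f" using f I(1) unfolding is_join_def by blast
  ultimately have "t *\<^sub>R x (- emb I) + r I *\<^sub>R x (- emb I) \<le> t *\<^sub>R 1 + f" by (rule D.L.add_mono)
  then show "s \<le> f + t *\<^sub>R 1" unfolding I(2) by (simp add: scaleR_add_left add.commute)
next
  fix u assume u: "\<forall>s\<in>{(t + r I) *\<^sub>R x (- emb I) | I. I \<in> Arch}. s \<le> u"
  have "(t + r {0}) *\<^sub>R 1 \<le> u" using u Arch_zero by (force simp: emb_zero x_top)
  moreover have "t *\<^sub>R (1::'d) \<le> (t + r {0}) *\<^sub>R 1"
    using r Arch_zero D.zero_le_one by (intro D.scaleR_right_mono) auto
  ultimately have tu: "t *\<^sub>R 1 \<le> u" by (rule order_trans[rotated])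
  have "r I *\<^sub>R x (- emb I) \<le> u - t *\<^sub>R 1" if I: "I \<in> Arch" for I
  proof -
    have "(t + r I) *\<^sub>R x (- emb I) \<le> u * x (- emb I)"
      using u I by (intro scaleR_x_le_mult_x) auto
    moreover have "t *\<^sub>R x (emb I) \<le> u * x (emb I)"
      using D.L.mult_right_mono[OF tu x_nonneg] by simp
    ultimately have "(t + r I) *\<^sub>R x (- emb I) + t *\<^sub>R x (emb I) \<le> u * x (- emb I) + u * x (emb I)"
      by (rule D.L.add_mono)
    moreover have "u * x (- emb I) + u * x (emb I) = u" by (simp add: x_compl algebra_simps)
    moreover have "(t + r I) *\<^sub>R x (- emb I) + t *\<^sub>R x (emb I) = r I *\<^sub>R x (- emb I) + t *\<^sub>R 1"
      by (simp add: x_compl algebra_simps)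
    ultimately show ?thesis by (simp add: D.L.le_diff_eq)
  qed
  then have "f \<le> u - t *\<^sub>R 1" using f unfolding is_join_def by blast
  then show "f + t *\<^sub>R 1 \<le> u" by (simp add: D.L.le_diff_eq)
qed

end

theorem lemmaA3:
  fixes emb :: "'a::{comm_ring_1, real_algebra_1, lattice} set \<Rightarrow> 'b::boolean_algebra"
    and x :: "'b \<Rightarrow> 'd::{comm_ring_1, real_algebra_1, lattice}"
  assumes "bal_algebra TYPE('a)"
    and "free_bool_ext emb"
    and "dedekind_completion_RB x"
  shows "(\<forall>I\<in>Arch. is_join {x (- emb J) | J. J \<in> Arch \<and> arch_join J I = UNIV} (x (emb I)))
    \<and> (\<forall>f::'d. 0 \<le> f \<longrightarrow>
         (\<exists>r :: 'a set \<Rightarrow> real. (\<forall>I\<in>Arch. 0 \<le> r I) \<and>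
            is_join {r I *\<^sub>R x (- emb I) | I. I \<in> Arch} f))
    \<and> (\<forall>(f::'d) (t::real) (r :: 'a set \<Rightarrow> real).
         0 \<le> f \<longrightarrow> 0 \<le> t \<longrightarrow> (\<forall>I\<in>Arch. 0 \<le> r I) \<longrightarrow>
         is_join {r I *\<^sub>R x (- emb I) | I. I \<in> Arch} f \<longrightarrow>
         is_join {(t + r I) *\<^sub>R x (- emb I) | I. I \<in> Arch} (f + t *\<^sub>R 1))"
proof -
  interpret arch_completion "TYPE('a)" emb x
    using assms by (intro arch_completion.intro bal_free_bool_ext.intro bal.intro
        bal_free_bool_ext_axioms.intro bal_completion.intro)
  have join_repr: "\<exists>r :: 'a set \<Rightarrow> real. (\<forall>I\<in>Arch. 0 \<le> r I) \<and>
      is_join {r I *\<^sub>R x (- emb I) | I. I \<in> Arch} f" if "0 \<le> f" for f :: 'd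
    using that by (intro exI[of _ "\<lambda>I. max_scale f (- emb I)"])
      (simp add: max_scale_nonneg nonneg_is_join_compl)
  show ?thesis by (simp add: x_emb_is_join join_repr join_add_const)
qed

end
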